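(* Let $A\in\mathbb{C}^{m\times n}$ ($m\ge 2$), $\alpha_0,\beta_0\in(0,\tfrac{\pi}{2})$, and suppose row $i_0$ of $A$ is weakly dominated by row $i_1$ of $A$ ($i_1\ne i_0$), i.e. $\mathrm{Re}((e^{i_0})^*Ad^j)\le\mathrm{Re}((e^{i_1})^*Ad^j)$ for all $j\in\mathcal J$, with strict inequality for at least one $j_0\in\mathcal J$. Let $A'\in\mathbb{C}^{(m-1)\times n}$ be obtained from $A$ by deleting row $i_0$. Suppose $(z^0,w^0)$, with $z^0=(z^0_1,\dots,z^0_{i_0-1},z^0_{i_0+1},\dots,z^0_m)\in S^{m-1}_{\alpha_0}$ and $w^0\in S^n_{\beta_0}$, is a complex Nash equilibrium of $G_{\mathcal C}(A')$, and suppose the condition of elimination $$\mathrm{Im}((e^{i_0})^*Aw^0)=\mathrm{Im}((e^{i_1})^*Aw^0)$$ holds. Then, with $z'^0=(z^0_1,\dots,z^0_{i_0-1},0,z^0_{i_0+1},\dots,z^0_m)\in S^m_{\alpha_0}$, the pair $(z'^0,w^0)$ is a complex Nash equilibrium of $G_{\mathcal C}(A)$ and $v_{A'}=v_A$.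
   Context: For $\gamma\in(0,\tfrac{\pi}{2})$ and $p\ge 1$ let $S^p_\gamma=\{z\in\mathbb{C}^p:\ \text{for each }k,\ z_k=0\text{ or }|\arg z_k|\le\gamma,\ \sum_{k=1}^p z_k=1\}$ ($\arg$ the principal argument in $(-\pi,\pi]$). Its extreme points are $d^1,\dots,d^{p^2}$, where $d^k=e^k$ (standard basis vector) for $k\le p$, and $d^{p+1},\dots,d^{p^2}$ are the $p(p-1)$ vectors having exactly two nonzero coordinates, one equal to $\tfrac12+bi$ and another equal to $\tfrac12-bi$, with $b=\tfrac12\tan\gamma$. The two-player zero-sum complex game $G_{\mathcal C}(A)$, for $A\in\mathbb{C}^{m\times n}$ and strategy arguments $\alpha_0,\beta_0$: player I chooses $z\in S^m_{\alpha_0}$, player II chooses $w\in S^n_{\beta_0}$, player I receives $\mathrm{Re}(z^*Aw)$ and player II receives $-\mathrm{Re}(z^*Aw)$ ($z^*$ the conjugate transpose); $G_{\mathcal C}(A')$ is defined the same way with $S^{m-1}_{\alpha_0}$ for player I. Here $d^j$, $j\in\mathcal J=\{1,\dots,n^2\}$, are the extreme points of $S^n_{\beta_0}$ and $e^i$ the standard basis vectors of $\mathbb{C}^m$. A pair $(z^0,w^0)$ is a complex Nash equilibrium if $\mathrm{Re}(z^*Aw^0)\le\mathrm{Re}((z^0)^*Aw^0)\le\mathrm{Re}((z^0)^*Aw)$ for all strategies $z$ of player I and $w$ of player II; the value of the game is $v_A=\mathrm{Re}((z^0)^*Aw^0)$ for a Nash equilibrium $(z^0,w^0)$. *)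

theory Defs
  imports "HOL-Analysis.Analysis"
begin

text \<open>Vectors in C^p are functions nat => complex, with coordinates indexed 0..p-1
  and required to vanish outside {..<p}. Matrices in C^(m x n) are functions
  nat => nat => complex (only entries with i < m, j < n matter).\<close>

definition cvecs :: "nat \<Rightarrow> (nat \<Rightarrow> complex) set" where
  "cvecs p = {z. \<forall>k. p \<le> k \<longrightarrow> z k = 0}"

definition strat :: "nat \<Rightarrow> real \<Rightarrow> (nat \<Rightarrow> complex) set" where
  "strat p \<gamma> = {z \<in> cvecs p. (\<forall>k<p. z k = 0 \<or> \<bar>Arg (z k)\<bar> \<le> \<gamma>) \<and> (\<Sum>k<p. z k) = 1}"

definition unitv :: "nat \<Rightarrow> nat \<Rightarrow> complex" where
  "unitv k = (\<lambda>i. if i = k then 1 else 0)"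

text \<open>The extreme points d^1, ..., d^(p^2) of S^p_gamma, as a set.\<close>
definition ext_pts :: "nat \<Rightarrow> real \<Rightarrow> (nat \<Rightarrow> complex) set" where
  "ext_pts p \<gamma> =
     {unitv k | k. k < p} \<union>
     {(\<lambda>i. (1/2 + \<i> * complex_of_real (tan \<gamma> / 2)) * unitv k i
           + (1/2 - \<i> * complex_of_real (tan \<gamma> / 2)) * unitv l i) | k l. k < p \<and> l < p \<and> k \<noteq> l}"

definition cform :: "nat \<Rightarrow> nat \<Rightarrow> (nat \<Rightarrow> complex) \<Rightarrow> (nat \<Rightarrow> nat \<Rightarrow> complex) \<Rightarrow> (nat \<Rightarrow> complex) \<Rightarrow> complex" where
  "cform p q z A w = (\<Sum>i<p. \<Sum>j<q. cnj (z i) * A i j * w j)"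

definition payoff :: "nat \<Rightarrow> nat \<Rightarrow> (nat \<Rightarrow> nat \<Rightarrow> complex) \<Rightarrow> (nat \<Rightarrow> complex) \<Rightarrow> (nat \<Rightarrow> complex) \<Rightarrow> real" where
  "payoff m n A z w = Re (cform m n z A w)"

definition complex_NE :: "nat \<Rightarrow> nat \<Rightarrow> real \<Rightarrow> real \<Rightarrow> (nat \<Rightarrow> nat \<Rightarrow> complex)
    \<Rightarrow> (nat \<Rightarrow> complex) \<Rightarrow> (nat \<Rightarrow> complex) \<Rightarrow> bool" where
  "complex_NE m n \<alpha>0 \<beta>0 A z0 w0 \<longleftrightarrow>
     z0 \<in> strat m \<alpha>0 \<and> w0 \<in> strat n \<beta>0 \<and>
     (\<forall>z \<in> strat m \<alpha>0. payoff m n A z w0 \<le> payoff m n A z0 w0) \<and>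
     (\<forall>w \<in> strat n \<beta>0. payoff m n A z0 w0 \<le> payoff m n A z0 w)"

definition game_value :: "nat \<Rightarrow> nat \<Rightarrow> real \<Rightarrow> real \<Rightarrow> (nat \<Rightarrow> nat \<Rightarrow> complex) \<Rightarrow> real" where
  "game_value m n \<alpha>0 \<beta>0 A =
     (THE v. \<exists>z0 w0. complex_NE m n \<alpha>0 \<beta>0 A z0 w0 \<and> v = payoff m n A z0 w0)"

definition del_row :: "nat \<Rightarrow> (nat \<Rightarrow> nat \<Rightarrow> complex) \<Rightarrow> (nat \<Rightarrow> nat \<Rightarrow> complex)" where
  "del_row i0 A = (\<lambda>i j. A (if i < i0 then i else Suc i) j)"

definition ins_zero :: "nat \<Rightarrow> (nat \<Rightarrow> complex) \<Rightarrow> (nat \<Rightarrow> complex)" where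
  "ins_zero i0 z = (\<lambda>k. if k < i0 then z k else if k = i0 then 0 else z (k - 1))"

end

theory Submission
  imports Defs
begin

text \<open>Writing \<open>\<bar>Arg z\<bar> \<le> \<gamma>\<close> as the cone condition \<open>\<bar>Im z\<bar> \<le> Re z \<cdot> tan \<gamma>\<close> makes
  the strategy sets convex cones sliced by \<open>\<Sum> z = 1\<close>. Moving the whole weight of row \<open>i0\<close> of a
  strategy of player I onto row \<open>i1\<close> stays in the cone and changes the payoff against \<open>w0\<close> by
  \<open>Re (conj z\<^sub>i\<^sub>0 \<cdot> D)\<close>, where \<open>D\<close> is the difference of the two rows evaluated at \<open>w0\<close>. The
  elimination condition makes \<open>D\<close> real, and \<open>Re D \<ge> 0\<close> because a real-linear functional that
  is nonnegative at the extreme points of \<open>S\<^sup>n\<^sub>\<beta>\<^sub>0\<close> is nonnegative on all of it. So every strategy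
  is weakly improved by one vanishing at \<open>i0\<close>, i.e. by a strategy of the reduced game, against
  which the equilibrium strategy \<open>z0\<close> is already a best response.\<close>

lemma abs_Im_le_Re_tan_if_abs_Arg_le:
  fixes z :: complex
  assumes "\<bar>Arg z\<bar> \<le> g" "g < pi / 2"
  shows "\<bar>Im z\<bar> \<le> Re z * tan g"
proof -
  define t where "t = \<bar>Arg z\<bar>"
  have t: "0 \<le> t" "t \<le> g" "t < pi / 2" using assms unfolding t_def by auto
  have polar: "Re z = cmod z * cos t" "Im z = cmod z * sin (Arg z)"
    using Re_rcis[of "cmod z" "Arg z"] Im_rcis[of "cmod z" "Arg z"] by (simp_all add: rcis_cmod_Arg t_def)
  have sin_t: "\<bar>sin (Arg z)\<bar> = sin t"
  proof (cases "Arg z \<ge> 0")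
    case True
    thus ?thesis using Arg_bounded[of z] sin_ge_zero[of "Arg z"] by (simp add: t_def)
  next
    case False
    hence "t = - Arg z" unfolding t_def by simp
    thus ?thesis using False Arg_bounded[of z] sin_ge_zero[of "- Arg z"] by simp
  qed
  have "sin t \<le> cos t * tan g"
  proof -
    have "cos t > 0" using t by (intro cos_gt_zero_pi) auto
    moreover have "tan t \<le> tan g" using t assms(2) by (intro tan_mono_le) auto
    ultimately show ?thesis by (simp add: tan_def field_simps)
  qed
  hence "cmod z * sin t \<le> cmod z * (cos t * tan g)" by (intro mult_left_mono) auto
  thus ?thesis using polar sin_t by (simp add: abs_mult mult.assoc)
qed

lemma abs_Arg_le_if_abs_Im_le_Re_tan:
  fixes z :: complex
  assumes "0 < g" "g < pi / 2" "\<bar>Im z\<bar> \<le> Re z * tan g"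
  shows "\<bar>Arg z\<bar> \<le> g"
proof (cases "Re z > 0")
  case True
  have "\<bar>Im z / Re z\<bar> \<le> tan g"
    using assms(3) True by (simp add: abs_divide pos_divide_le_eq mult.commute)
  hence "- tan g \<le> Im z / Re z" "Im z / Re z \<le> tan g" by linarith+
  hence "arctan (- tan g) \<le> arctan (Im z / Re z)" "arctan (Im z / Re z) \<le> arctan (tan g)"
    by (simp_all only: arctan_le_iff)
  moreover have "arctan (tan g) = g" using assms(1,2) by (intro arctan_tan) auto
  ultimately show ?thesis using arg_conv_arctan[OF True] by (simp add: arctan_minus)
next
  case False
  have "tan g > 0" using assms(1,2) by (intro tan_gt_zero) auto
  have "0 \<le> Re z * tan g" using assms(3) by linarith
  hence "Re z = 0" using False \<open>tan g > 0\<close> by (simp add: zero_le_mult_iff)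
  hence "z = 0" using assms(3) by (simp add: complex_eq_iff)
  thus ?thesis using assms(1) by (simp add: Arg_zero)
qed

lemma sector_iff_cone:
  fixes z :: complex
  assumes "0 < g" "g < pi / 2"
  shows "(z = 0 \<or> \<bar>Arg z\<bar> \<le> g) \<longleftrightarrow> \<bar>Im z\<bar> \<le> Re z * tan g"
  using assms abs_Im_le_Re_tan_if_abs_Arg_le abs_Arg_le_if_abs_Im_le_Re_tan by fastforce

lemma mult_le_mult_of_cone_bounds:
  fixes a b x y s :: real
  assumes "0 < s" "\<bar>y\<bar> \<le> x * s" "\<bar>b\<bar> * s \<le> a"
  shows "b * y \<le> a * x"
proof -
  have "b * y * s \<le> \<bar>b\<bar> * s * \<bar>y\<bar>"
    using assms(1) abs_ge_self[of "b * y"] by (simp add: abs_mult mult_ac)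
  also have "\<dots> \<le> a * \<bar>y\<bar>" using assms(3) by (intro mult_right_mono) auto
  also have "\<dots> \<le> a * (x * s)"
  proof (rule mult_left_mono[OF assms(2)])
    have "0 \<le> \<bar>b\<bar> * s" using assms(1) by simp
    thus "0 \<le> a" using assms(3) by linarith
  qed
  finally show ?thesis using assms(1) by (simp add: mult.assoc)
qed

lemma sum_pairing_nonneg_if_cone:
  fixes a b x y :: "'i \<Rightarrow> real" and s :: real
  assumes "finite I" "0 < s"
    and pair: "\<And>k l. k \<in> I \<Longrightarrow> l \<in> I \<Longrightarrow> (b k - b l) * s \<le> a k + a l"
    and cone: "\<And>j. j \<in> I \<Longrightarrow> \<bar>y j\<bar> \<le> x j * s"
    and balanced: "(\<Sum>j\<in>I. y j) = 0"
  shows "0 \<le> (\<Sum>j\<in>I. a j * x j - b j * y j)"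
proof (cases "I = {}")
  case True thus ?thesis by simp
next
  case False
  \<comment> \<open>Since the y j sum to zero, b may be shifted by a constant C; pick C with
      \<bar>b j - C\<bar> * s \<le> a j for every j.\<close>
  define C where "C = Max ((\<lambda>k. b k - a k / s) ` I)"
  have "C \<in> (\<lambda>k. b k - a k / s) ` I" unfolding C_def using assms(1) False by (intro Max_in) auto
  then obtain k0 where k0: "k0 \<in> I" "C = b k0 - a k0 / s" by blast
  have "\<bar>b j - C\<bar> * s \<le> a j" if j: "j \<in> I" for j
  proof -
    have "b j - a j / s \<le> C" unfolding C_def using j assms(1) by (intro Max_ge) auto
    moreover have "C \<le> b j + a j / s" using pair[OF k0(1) j] k0(2) assms(2)
      by (simp add: field_simps)
    ultimately have "(b j - C) * s \<le> a j" "(C - b j) * s \<le> a j"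
      using assms(2) by (simp_all add: field_simps)
    thus ?thesis by (cases "b j \<ge> C") (simp_all add: abs_if algebra_simps)
  qed
  hence "(b j - C) * y j \<le> a j * x j" if "j \<in> I" for j
    using mult_le_mult_of_cone_bounds[OF assms(2) cone] that by blast
  hence "0 \<le> (\<Sum>j\<in>I. a j * x j - (b j - C) * y j)" by (intro sum_nonneg) auto
  also have "\<dots> = (\<Sum>j\<in>I. a j * x j - b j * y j) + C * (\<Sum>j\<in>I. y j)"
    by (simp add: sum_subtractf sum.distrib sum_distrib_left algebra_simps)
  finally show ?thesis using balanced by simp
qed

lemma strat_iff_cone:
  assumes "0 < \<gamma>" "\<gamma> < pi / 2"
  shows "z \<in> strat p \<gamma> \<longleftrightarrow>
    z \<in> cvecs p \<and> (\<forall>k<p. \<bar>Im (z k)\<bar> \<le> Re (z k) * tan \<gamma>) \<and> (\<Sum>k<p. z k) = 1"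
  unfolding strat_def using sector_iff_cone[OF assms] by blast

lemma sum_mult_unitv: "k < n \<Longrightarrow> (\<Sum>j<n. c j * unitv k j) = c k"
  by (simp add: unitv_def if_distrib cong: if_cong)

lemma Re_sum_nonneg_on_strat:
  fixes c :: "nat \<Rightarrow> complex"
  assumes "0 < \<beta>" "\<beta> < pi / 2" "w \<in> strat n \<beta>"
    and ext: "\<forall>d \<in> ext_pts n \<beta>. 0 \<le> Re (\<Sum>j<n. c j * d j)"
  shows "0 \<le> Re (\<Sum>j<n. c j * w j)"
proof -
  define s where "s = tan \<beta>"
  have s: "0 < s" unfolding s_def using assms(1,2) by (intro tan_gt_zero) auto
  have Re_c: "0 \<le> Re (c k)" if "k < n" for k
  proof -
    have "unitv k \<in> ext_pts n \<beta>" unfolding ext_pts_def using that by blast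
    thus ?thesis using ext sum_mult_unitv[OF that, of c] by fastforce
  qed
  have pair: "(Im (c k) - Im (c l)) * s \<le> Re (c k) + Re (c l)" if kl: "k < n" "l < n" for k l
  proof (cases "k = l")
    case True thus ?thesis using Re_c[OF kl(1)] by simp
  next
    case False
    define p where "p = 1/2 + \<i> * complex_of_real (tan \<beta> / 2)"
    define q where "q = 1/2 - \<i> * complex_of_real (tan \<beta> / 2)"
    have "(\<lambda>i. p * unitv k i + q * unitv l i) \<in> ext_pts n \<beta>"
      unfolding ext_pts_def p_def q_def using kl False by blast
    from bspec[OF ext this] have "0 \<le> Re (\<Sum>j<n. c j * (p * unitv k j + q * unitv l j))"
      by simp
    also have "(\<Sum>j<n. c j * (p * unitv k j + q * unitv l j))
        = (\<Sum>j<n. (c j * p) * unitv k j) + (\<Sum>j<n. (c j * q) * unitv l j)"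
      by (simp add: sum.distrib algebra_simps)
    also have "\<dots> = c k * p + c l * q" using kl by (simp add: sum_mult_unitv)
    finally show ?thesis by (simp add: p_def q_def s_def algebra_simps)
  qed
  have cone: "\<bar>Im (w j)\<bar> \<le> Re (w j) * s" if "j < n" for j
    using assms(3) that unfolding strat_iff_cone[OF assms(1,2)] s_def by auto
  have balanced: "(\<Sum>j<n. Im (w j)) = 0" using assms(3) unfolding strat_def by (simp flip: Im_sum)
  have "0 \<le> (\<Sum>j<n. Re (c j) * Re (w j) - Im (c j) * Im (w j))"
    using sum_pairing_nonneg_if_cone[of "{..<n}" s "Im \<circ> c" "Re \<circ> c" "Im \<circ> w" "Re \<circ> w"]
      s pair cone balanced by simp
  thus ?thesis by (simp add: Re_sum)
qed

lemma cform_eq_sum_rows: "cform m n z A w = (\<Sum>i<m. cnj (z i) * (\<Sum>j<n. A i j * w j))"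
  unfolding cform_def by (simp add: sum_distrib_left mult.assoc)

lemma cnj_unitv [simp]: "cnj (unitv k i) = unitv k i"
  by (simp add: unitv_def)

lemma cform_unitv: "i < m \<Longrightarrow> cform m n (unitv i) A w = (\<Sum>j<n. A i j * w j)"
  unfolding cform_eq_sum_rows using sum_mult_unitv[of i m "\<lambda>k. \<Sum>j<n. A k j * w j"]
  by (simp add: mult.commute)

lemma Re_cform_unitv_mono_on_strat:
  assumes "0 < \<beta>" "\<beta> < pi / 2" "i < m" "i' < m" "w \<in> strat n \<beta>"
    and "\<forall>d \<in> ext_pts n \<beta>. Re (cform m n (unitv i) A d) \<le> Re (cform m n (unitv i') A d)"
  shows "Re (cform m n (unitv i) A w) \<le> Re (cform m n (unitv i') A w)"
proof -
  have diff: "(\<Sum>j<n. (A i' j - A i j) * d j) = cform m n (unitv i') A d - cform m n (unitv i) A d"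
    for d using assms(3,4) by (simp add: cform_unitv sum_subtractf left_diff_distrib)
  have "0 \<le> Re (\<Sum>j<n. (A i' j - A i j) * w j)"
    using assms(6) by (intro Re_sum_nonneg_on_strat[OF assms(1,2,5)]) (simp add: diff)
  thus ?thesis by (simp add: diff)
qed

definition move_mass :: "nat \<Rightarrow> nat \<Rightarrow> (nat \<Rightarrow> complex) \<Rightarrow> nat \<Rightarrow> complex" where
  "move_mass k l z = z(k := 0, l := z l + z k)"

lemma move_mass_eq:
  "k \<noteq> l \<Longrightarrow> move_mass k l z = (\<lambda>i. z i + z k * (unitv l i - unitv k i))"
  by (auto simp: move_mass_def unitv_def)

lemma move_mass_in_strat:
  assumes "0 < \<gamma>" "\<gamma> < pi / 2" "k < p" "l < p" "k \<noteq> l" "z \<in> strat p \<gamma>"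
  shows "move_mass k l z \<in> strat p \<gamma>"
proof -
  have cone: "\<bar>Im (z i)\<bar> \<le> Re (z i) * tan \<gamma>" if "i < p" for i
    using assms(6) that unfolding strat_iff_cone[OF assms(1,2)] by blast
  have "\<bar>Im (z l + z k)\<bar> \<le> Re (z l + z k) * tan \<gamma>"
    using cone[OF assms(4)] cone[OF assms(3)] abs_triangle_ineq[of "Im (z l)" "Im (z k)"]
    by (simp add: distrib_right)
  moreover have "(\<Sum>i<p. move_mass k l z i) = (\<Sum>i<p. z i)"
    using assms(3-5) by (simp add: move_mass_eq sum.distrib sum_subtractf right_diff_distrib
        sum_mult_unitv)
  ultimately show ?thesis
    using assms(3-6) cone unfolding strat_iff_cone[OF assms(1,2)] cvecs_def move_mass_def by auto
qed

lemma cform_move_mass: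
  assumes "k < m" "l < m" "k \<noteq> l"
  shows "cform m n (move_mass k l z) A w
    = cform m n z A w + cnj (z k) * (cform m n (unitv l) A w - cform m n (unitv k) A w)"
proof -
  define r where "r i = (\<Sum>j<n. A i j * w j)" for i
  have "cform m n (move_mass k l z) A w
      = (\<Sum>i<m. cnj (z i) * r i + (cnj (z k) * r i) * unitv l i - (cnj (z k) * r i) * unitv k i)"
    unfolding cform_eq_sum_rows move_mass_eq[OF assms(3)] r_def
    by (intro sum.cong) (simp_all add: unitv_def algebra_simps)
  also have "\<dots> = cform m n z A w + cnj (z k) * r l - cnj (z k) * r k"
    using assms(1,2) by (simp add: sum.distrib sum_subtractf sum_mult_unitv cform_eq_sum_rows r_def)
  finally show ?thesis using assms(1,2) by (simp add: cform_unitv r_def algebra_simps)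
qed

lemma payoff_le_move_mass:
  assumes "0 < \<alpha>" "\<alpha> < pi / 2" "k < m" "l < m" "k \<noteq> l" "z \<in> strat m \<alpha>"
    and Re_le: "Re (cform m n (unitv k) A w) \<le> Re (cform m n (unitv l) A w)"
    and Im_eq: "Im (cform m n (unitv k) A w) = Im (cform m n (unitv l) A w)"
  shows "payoff m n A z w \<le> payoff m n A (move_mass k l z) w"
proof -
  define D where "D = cform m n (unitv l) A w - cform m n (unitv k) A w"
  \<comment> \<open>Without the elimination condition, Im (z k) * Im D could make the gain negative.\<close>
  have "Re (cnj (z k) * D) = Re (z k) * Re D" using Im_eq by (simp add: D_def)
  moreover have "0 \<le> Re D" using Re_le by (simp add: D_def)
  moreover have "0 \<le> Re (z k)"
  proof -
    have "\<bar>Im (z k)\<bar> \<le> Re (z k) * tan \<alpha>"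
      using assms(3,6) unfolding strat_iff_cone[OF assms(1,2)] by blast
    moreover have "0 < tan \<alpha>" using assms(1,2) by (intro tan_gt_zero) auto
    ultimately show ?thesis
      by (metis abs_ge_zero order.trans zero_le_mult_iff not_less)
  qed
  ultimately have "0 \<le> Re (cnj (z k) * D)" by (metis mult_nonneg_nonneg)
  thus ?thesis unfolding payoff_def cform_move_mass[OF assms(3-5)] D_def[symmetric] by simp
qed

lemma sum_ins_zero:
  assumes "i0 < m"
  shows "(\<Sum>i<m. f i (ins_zero i0 u i)) = f i0 0 + (\<Sum>k<m - 1. f (if k < i0 then k else Suc k) (u k))"
proof -
  define g where "g k = (if k < i0 then k else Suc k)" for k
  have range: "{..<m} = insert i0 (g ` {..<m - 1})"
  proof (intro set_eqI iffI)
    fix i assume i: "i \<in> {..<m}"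
    show "i \<in> insert i0 (g ` {..<m - 1})"
    proof (cases "i < i0")
      case True thus ?thesis using assms by (auto simp: g_def image_iff intro!: bexI[of _ i])
    next
      case False thus ?thesis using i by (auto simp: g_def image_iff intro!: bexI[of _ "i - 1"])
    qed
  qed (use assms in \<open>auto simp: g_def\<close>)
  have "inj g" by (auto simp: g_def inj_def split: if_splits)
  moreover have "i0 \<notin> g ` {..<m - 1}" by (auto simp: g_def)
  moreover have "ins_zero i0 u (g k) = u k" for k by (simp add: g_def ins_zero_def)
  moreover have "ins_zero i0 u i0 = 0" by (simp add: ins_zero_def)
  ultimately show ?thesis
    unfolding range by (simp add: sum.reindex inj_on_subset) (simp add: g_def)
qed

lemma payoff_ins_zero:
  assumes "i0 < m"
  shows "payoff m n A (ins_zero i0 u) w = payoff (m - 1) n (del_row i0 A) u w"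
  unfolding payoff_def cform_def del_row_def
  using sum_ins_zero[OF assms, of "\<lambda>i v. \<Sum>j<n. cnj v * A i j * w j" u] by simp

lemma ins_zero_in_strat:
  assumes "i0 < m" "u \<in> strat (m - 1) \<gamma>"
  shows "ins_zero i0 u \<in> strat m \<gamma>"
proof -
  have "(\<Sum>k<m. ins_zero i0 u k) = (\<Sum>k<m - 1. u k)"
    using sum_ins_zero[OF assms(1), of "\<lambda>i v. v" u] by simp
  thus ?thesis using assms unfolding strat_def cvecs_def ins_zero_def by auto
qed

definition del_coord :: "nat \<Rightarrow> (nat \<Rightarrow> complex) \<Rightarrow> nat \<Rightarrow> complex" where
  "del_coord i0 z = (\<lambda>k. if k < i0 then z k else z (Suc k))"

lemma ins_zero_del_coord: "z i0 = 0 \<Longrightarrow> ins_zero i0 (del_coord i0 z) = z"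
  unfolding ins_zero_def del_coord_def by (rule ext) auto

lemma del_coord_in_strat:
  assumes "i0 < m" "z \<in> strat m \<gamma>" "z i0 = 0"
  shows "del_coord i0 z \<in> strat (m - 1) \<gamma>"
proof -
  have "(\<Sum>k<m - 1. del_coord i0 z k) = (\<Sum>k<m. z k)"
    using sum_ins_zero[OF assms(1), of "\<lambda>i v. v" "del_coord i0 z"]
    by (simp add: ins_zero_del_coord[of z i0, OF assms(3)])
  moreover have "\<forall>k<m - 1. del_coord i0 z k = 0 \<or> \<bar>Arg (del_coord i0 z k)\<bar> \<le> \<gamma>"
    using assms(2) unfolding strat_def del_coord_def by auto
  ultimately show ?thesis using assms(1,2) unfolding strat_def cvecs_def del_coord_def by auto
qed

lemma game_value_eq_payoff:
  assumes "complex_NE m n \<alpha> \<beta> A z w"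
  shows "game_value m n \<alpha> \<beta> A = payoff m n A z w"
  unfolding game_value_def
proof (rule the_equality)
  fix v assume "\<exists>z' w'. complex_NE m n \<alpha> \<beta> A z' w' \<and> v = payoff m n A z' w'"
  then obtain z' w' where NE': "complex_NE m n \<alpha> \<beta> A z' w'" and v: "v = payoff m n A z' w'"
    by blast
  have "payoff m n A z w \<le> payoff m n A z w'" "payoff m n A z' w \<le> payoff m n A z w"
    "payoff m n A z' w' \<le> payoff m n A z' w" "payoff m n A z w' \<le> payoff m n A z' w'"
    using assms NE' unfolding complex_NE_def by blast+
  thus "v = payoff m n A z w" using v by linarith
qed (use assms in blast)

lemma ins_zero_best_response:
  assumes "0 < \<alpha>" "\<alpha> < pi / 2" "i0 < m" "i1 < m" "i1 \<noteq> i0" "z \<in> strat m \<alpha>"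
    and Re_le: "Re (cform m n (unitv i0) A w) \<le> Re (cform m n (unitv i1) A w)"
    and Im_eq: "Im (cform m n (unitv i0) A w) = Im (cform m n (unitv i1) A w)"
    and best: "\<forall>u \<in> strat (m - 1) \<alpha>. payoff (m - 1) n (del_row i0 A) u w
                                    \<le> payoff (m - 1) n (del_row i0 A) u0 w"
  shows "payoff m n A z w \<le> payoff m n A (ins_zero i0 u0) w"
proof -
  define z' where "z' = move_mass i0 i1 z"
  have z': "z' \<in> strat m \<alpha>" "z' i0 = 0"
    using move_mass_in_strat[OF assms(1,2,3,4) _ assms(6)] assms(5) by (auto simp: z'_def move_mass_def)
  have "payoff m n A z w \<le> payoff m n A z' w"
    unfolding z'_def using assms(5) by (intro payoff_le_move_mass[OF assms(1-4) _ assms(6) Re_le Im_eq]) auto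
  also have "\<dots> = payoff (m - 1) n (del_row i0 A) (del_coord i0 z') w"
    using payoff_ins_zero[OF assms(3), of n A "del_coord i0 z'" w] ins_zero_del_coord[of z' i0] z'(2)
    by simp
  also have "\<dots> \<le> payoff (m - 1) n (del_row i0 A) u0 w"
    using best del_coord_in_strat[OF assms(3) z'] by blast
  also have "\<dots> = payoff m n A (ins_zero i0 u0) w"
    using payoff_ins_zero[OF assms(3)] by simp
  finally show ?thesis .
qed

theorem theorem6p9:
  fixes m n :: nat and \<alpha>0 \<beta>0 :: real and A :: "nat \<Rightarrow> nat \<Rightarrow> complex"
    and i0 i1 :: nat and z0 w0 :: "nat \<Rightarrow> complex"
  assumes "m \<ge> 2"
    and "0 < \<alpha>0" "\<alpha>0 < pi / 2" "0 < \<beta>0" "\<beta>0 < pi / 2"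
    and "i0 < m" "i1 < m" "i1 \<noteq> i0"
    and "\<forall>d \<in> ext_pts n \<beta>0. Re (cform m n (unitv i0) A d) \<le> Re (cform m n (unitv i1) A d)"
    and "\<exists>d \<in> ext_pts n \<beta>0. Re (cform m n (unitv i0) A d) < Re (cform m n (unitv i1) A d)"
    and "complex_NE (m - 1) n \<alpha>0 \<beta>0 (del_row i0 A) z0 w0"
    and "Im (cform m n (unitv i0) A w0) = Im (cform m n (unitv i1) A w0)"
  shows "complex_NE m n \<alpha>0 \<beta>0 A (ins_zero i0 z0) w0
    \<and> game_value (m - 1) n \<alpha>0 \<beta>0 (del_row i0 A) = game_value m n \<alpha>0 \<beta>0 A"
proof -
  note NE' = assms(11)[unfolded complex_NE_def]
  have w0: "w0 \<in> strat n \<beta>0" using NE' by blast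
  have pay: "payoff m n A (ins_zero i0 z0) w = payoff (m - 1) n (del_row i0 A) z0 w" for w
    using payoff_ins_zero[OF assms(6)] .
  have "Re (cform m n (unitv i0) A w0) \<le> Re (cform m n (unitv i1) A w0)"
    by (rule Re_cform_unitv_mono_on_strat[OF assms(4,5,6,7) w0 assms(9)])
  hence "payoff m n A z w0 \<le> payoff m n A (ins_zero i0 z0) w0" if "z \<in> strat m \<alpha>0" for z
    using ins_zero_best_response[OF assms(2,3,6,7,8) that _ assms(12)] NE' by blast
  hence NE: "complex_NE m n \<alpha>0 \<beta>0 A (ins_zero i0 z0) w0"
    unfolding complex_NE_def using NE' ins_zero_in_strat[OF assms(6)] pay by auto
  show ?thesis
    using NE game_value_eq_payoff[OF NE] game_value_eq_payoff[OF assms(11)] pay by simp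
qed

end
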